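(* Let $\Lambda\subseteq\Lambda_f\subset\mathbb{R}^n$ be nested lattices with Voronoi regions $\mathcal{V}$ and $\mathcal{V}_f$ respectively, and suppose the tiling condition $\mathcal{V}=(\Lambda_f\cap\mathcal{V})+\mathcal{V}_f$ holds (Minkowski sum). Then for every $\mathbf{x}\in\mathbb{R}^n$, $$[Q_{\Lambda_f}(\mathbf{x})]\bmod\Lambda=Q_{\Lambda_f}\big([\mathbf{x}]\bmod\Lambda\big).$$
   Context: For a lattice $L\subset\mathbb{R}^n$ with Voronoi region $\mathcal{V}_L$ (the set of points whose nearest lattice point is $\mathbf{0}$, ties broken systematically so that $\mathcal{V}_L$ is a fundamental domain), $Q_L(\mathbf{y})$ is the unique $\mathbf{t}\in L$ with $\mathbf{y}-\mathbf{t}\in\mathcal{V}_L$, and $[\mathbf{y}]\bmod L=\mathbf{y}-Q_L(\mathbf{y})$. *)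

theory Defs
  imports "HOL-Analysis.Analysis"
begin

definition is_lattice :: "(real ^ 'n) set \<Rightarrow> bool" where
  "is_lattice L \<longleftrightarrow> (\<exists>B :: real ^ 'n ^ 'n. invertible B \<and>
      L = {B *v z | z. \<forall>i. z $ i \<in> \<int>})"

text \<open>V is a Voronoi region of L: it consists of points whose nearest lattice point is 0
  (V is contained in the closed Voronoi cell), with ties broken so that V is a fundamental
  domain (every y has a unique t in L with y - t in V).\<close>
definition voronoi_region :: "(real ^ 'n) set \<Rightarrow> (real ^ 'n) set \<Rightarrow> bool" where
  "voronoi_region L V \<longleftrightarrow>
     V \<subseteq> {y. \<forall>t\<in>L. norm y \<le> norm (y - t)} \<and>
     (\<forall>y. \<exists>!t. t \<in> L \<and> y - t \<in> V)"

definition quant :: "(real ^ 'n) set \<Rightarrow> (real ^ 'n) set \<Rightarrow> real ^ 'n \<Rightarrow> real ^ 'n" where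
  "quant L V y = (THE t. t \<in> L \<and> y - t \<in> V)"

definition lmod :: "(real ^ 'n) set \<Rightarrow> (real ^ 'n) set \<Rightarrow> real ^ 'n \<Rightarrow> real ^ 'n" where
  "lmod L V y = y - quant L V y"

end

theory Submission
  imports Defs
begin

text \<open>Write \<open>t = Q\<^sub>f(x)\<close> and \<open>s = Q(t)\<close>. Then \<open>x - s = (t - s) + (x - t)\<close> with
  \<open>t - s \<in> \<Lambda>\<^sub>f \<inter> \<V>\<close> and \<open>x - t \<in> \<V>\<^sub>f\<close>, so the tiling condition puts \<open>x - s\<close> in \<open>\<V>\<close>:
  the coarse quantizer gives the same point \<open>s\<close> for \<open>x\<close> and for \<open>Q\<^sub>f(x)\<close>. Since quantizers
  commute with lattice translations, \<open>Q\<^sub>f(x - s) = t - s\<close>, which is the claim.\<close>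

lemma quant_eqI:
  assumes "voronoi_region L V" "t \<in> L" "y - t \<in> V"
  shows "quant L V y = t"
proof -
  from assms(1) have "\<exists>!t. t \<in> L \<and> y - t \<in> V" by (simp add: voronoi_region_def)
  then show ?thesis unfolding quant_def using assms(2,3) by (simp add: the1_equality)
qed

lemma quant_in_lattice_and_region:
  assumes "voronoi_region L V"
  shows "quant L V y \<in> L" "y - quant L V y \<in> V"
proof -
  from assms have "\<exists>!t. t \<in> L \<and> y - t \<in> V" by (simp add: voronoi_region_def)
  then have "quant L V y \<in> L \<and> y - quant L V y \<in> V" unfolding quant_def by (rule theI')
  then show "quant L V y \<in> L" "y - quant L V y \<in> V" by auto
qed

lemma lattice_diff_closed:
  fixes L :: "(real ^ 'n) set"
  assumes "is_lattice L" "a \<in> L" "b \<in> L"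
  shows "a - b \<in> L"
proof -
  obtain B :: "real ^ 'n ^ 'n" where L: "L = {B *v z | z. \<forall>i. z $ i \<in> \<int>}"
    using assms(1) unfolding is_lattice_def by blast
  obtain z1 where z1: "a = B *v z1" "\<forall>i. z1 $ i \<in> \<int>" using assms(2) L by blast
  obtain z2 where z2: "b = B *v z2" "\<forall>i. z2 $ i \<in> \<int>" using assms(3) L by blast
  have "a - b = B *v (z1 - z2)" using z1 z2 by (simp add: matrix_vector_mult_diff_distrib)
  moreover have "\<forall>i. (z1 - z2) $ i \<in> \<int>" using z1 z2 by (simp add: Ints_diff)
  ultimately show ?thesis using L by blast
qed

lemma quant_diff_lattice_point:
  fixes L :: "(real ^ 'n) set"
  assumes "is_lattice L" "voronoi_region L V" "s \<in> L"
  shows "quant L V (y - s) = quant L V y - s"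
proof (rule quant_eqI[OF assms(2)])
  show "quant L V y - s \<in> L"
    using lattice_diff_closed[OF assms(1) _ assms(3)] quant_in_lattice_and_region[OF assms(2)]
    by blast
  show "y - s - (quant L V y - s) \<in> V"
    using quant_in_lattice_and_region(2)[OF assms(2)] by simp
qed

lemma quant_coarse_of_quant_fine:
  fixes L Lf :: "(real ^ 'n) set"
  assumes "is_lattice Lf" "L \<subseteq> Lf" "voronoi_region L V" "voronoi_region Lf Vf"
    and tiling: "\<And>a b. a \<in> Lf \<inter> V \<Longrightarrow> b \<in> Vf \<Longrightarrow> a + b \<in> V"
  shows "quant L V (quant Lf Vf x) = quant L V x"
proof -
  define t where "t = quant Lf Vf x"
  define s where "s = quant L V t"
  have t: "t \<in> Lf" "x - t \<in> Vf"
    unfolding t_def using quant_in_lattice_and_region[OF assms(4)] by auto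
  have s: "s \<in> L" "t - s \<in> V"
    unfolding s_def using quant_in_lattice_and_region[OF assms(3)] by auto
  have "t - s \<in> Lf" using lattice_diff_closed[OF assms(1) t(1)] s(1) assms(2) by blast
  then have "(t - s) + (x - t) \<in> V" using tiling s(2) t(2) by blast
  then have "quant L V x = s" using quant_eqI[OF assms(3) s(1)] by simp
  then show ?thesis unfolding s_def t_def by simp
qed

theorem lemma6:
  fixes Lam Lamf V Vf :: "(real ^ 'n) set"
  assumes "is_lattice Lam" and "is_lattice Lamf" and "Lam \<subseteq> Lamf"
    and "voronoi_region Lam V" and "voronoi_region Lamf Vf"
    and "V = {a + b | a b. a \<in> Lamf \<inter> V \<and> b \<in> Vf}"
  shows "\<forall>x. lmod Lam V (quant Lamf Vf x) = quant Lamf Vf (lmod Lam V x)"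
proof
  fix x
  have tiling: "\<And>a b. a \<in> Lamf \<inter> V \<Longrightarrow> b \<in> Vf \<Longrightarrow> a + b \<in> V"
    using assms(6) by blast
  have same_coarse: "quant Lam V (quant Lamf Vf x) = quant Lam V x"
    using quant_coarse_of_quant_fine[OF assms(2,3,4,5) tiling] .
  have "quant Lam V x \<in> Lamf"
    using quant_in_lattice_and_region(1)[OF assms(4)] assms(3) by blast
  then have "quant Lamf Vf (x - quant Lam V x) = quant Lamf Vf x - quant Lam V x"
    using quant_diff_lattice_point[OF assms(2,5)] by blast
  then show "lmod Lam V (quant Lamf Vf x) = quant Lamf Vf (lmod Lam V x)"
    by (simp add: lmod_def same_coarse)
qed

end
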